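(* Let $0\le s\le r\le T$, $x_*,y_*\in\mathbb T^d$, $m(\cdot),\nu(\cdot)\in\mathcal M^{C_0}$, $u_*=\hat u(s,x_*,y_*,m(s))$, $v^*=\hat v(s,x_*,y_*,m(s))$, $\xi\in\mathcal U$, $\zeta\in\mathcal V$, and let $x(\cdot)=x(\cdot,s,x_*,m(\cdot),\delta_{u_*}\zeta)$, $y(\cdot)=x(\cdot,s,y_*,\nu(\cdot),\xi\delta_{v^*})$. Then $$\|x(r)-y(r)\|^2\le\|x_*-y_*\|^2(1+3L(r-s))+LW_2^2(m(s),\nu(s))(r-s)+\varpi_2(r-s)\,(r-s).$$
   Context: Standing setup. Let $T>0$, $\mathbb T^d=\mathbb R^d/\mathbb Z^d$ with metric $\|x-y\|=\min\{\|x'-y'\|:x'\in x,\ y'\in y\}$. $\mathcal P^2(\mathbb T^d)$ is the set of Borel probability measures on $\mathbb T^d$ with the 2-Wasserstein metric $W_2$ (a compact metric space). $U,V$ are compact metric spaces. $f:[0,T]\times\mathbb T^d\times\mathcal P^2(\mathbb T^d)\times U\times V\to\mathbb R^d$ is continuous and satisfies $\|f(t,x,m,u,v)-f(t,x',m',u,v)\|\le L\|x-x'\|+LW_2(m,m')$ for all arguments; the Isaacs condition holds: $\min_{u\in U}\max_{v\in V}\langle w,f(t,x,m,u,v)\rangle=\max_{v\in V}\min_{u\in U}\langle w,f(t,x,m,u,v)\rangle$ for all $t,x,m$ and $w\in\mathbb R^d$. Relaxed controls: with $\lambda$ Lebesgue measure on $[0,T]$, $\mathcal U$, $\mathcal V$,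 $\mathcal W$ denote the measurable (in the weak sense) maps from $[0,T]$ to $\mathcal P(U)$, $\mathcal P(V)$, $\mathcal P(U\times V)$ modulo $\lambda$-a.e. equality. For $\xi\in\mathcal U$, $\zeta\in\mathcal V$, $\xi\zeta\in\mathcal W$ is $t\mapsto\xi(t)\otimes\zeta(t)$; for $u\in U$, $\delta_u$ denotes the constant control $t\mapsto\delta_u$ (similarly $\delta_v$). $\mathcal M=C([0,T],\mathcal P^2(\mathbb T^d))$ and $\mathcal M^R$ is the set of $m(\cdot)\in\mathcal M$ with $W_2(m(t'),m(t''))\le R|t'-t''|$. For $s\in[0,T]$, $y\in\mathbb T^d$, $m(\cdot)\in\mathcal M$, $\eta\in\mathcal W$, $x(\cdot,s,y,m(\cdot),\eta)$ is the solution on $[0,T]$ of $\frac{d}{dt}x(t)=\int_{U\times V}f(t,x(t),m(t),u,v)\eta(t,d(u,v))$, $x(s)=y$. Constants: $C_0$ is a constant with $\|f(t,x,m,u,v)\|\le C_0$ for all arguments. $\varpi_f:\mathbb R\to[0,\infty)$ is even, nondecreasing on $[0,\infty)$, vanishing and continuous at $0$, with $\|f(t,x,m,u,v)-f(t',x,m,u,v)\|\le\varpi_f(t-t')$. Set $\varpi_1(\varepsilon)=2\sqrt d\,\varpi_f(\varepsilon)+4\sqrt d\,LC_0\varepsilon$ and $\varpi_2(\varepsilon)=2\varpi_1(\varepsilon)+4C_0^2\varepsilon$. Extremal controls: for $s\in[0,T]$, $x,y\in\mathbb T^d$, $m\in\mathcal P^2(\mathbb T^d)$, fix representatives $x'\in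 x$, $y'\in y$ in $\mathbb R^d$ with $\|x'-y'\|=\|x-y\|$, and let $\hat u(s,x,y,m)\in\operatorname{argmin}_{u\in U}\max_{v\in V}\langle x'-y',f(s,x,m,u,v)\rangle$ and $\hat v(s,x,y,m)\in\operatorname{argmax}_{v\in V}\min_{u\in U}\langle x'-y',f(s,x,m,u,v)\rangle$ (chosen measurably in their arguments). *)

theory Defs
  imports "HOL-Probability.Probability"
begin

text \<open>Points of the torus T^d are represented by (any) representative in real^'d;
  d = CARD('d).\<close>

definition int_vec :: "int ^ 'd \<Rightarrow> real ^ 'd" where
  "int_vec k = (\<chi> i. of_int (k $ i))"

definition tdist :: "real ^ 'd::finite \<Rightarrow> real ^ 'd \<Rightarrow> real" where
  "tdist x y = (INF k \<in> (UNIV :: (int ^ 'd) set). norm (x - y + int_vec k))"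

text \<open>Borel probability measures on T^d, represented as Borel probability measures
  on real^'d concentrated on the fundamental domain [0,1)^d.\<close>
definition unit_cell :: "(real ^ 'd::finite) set" where
  "unit_cell = {x. \<forall>i. 0 \<le> x $ i \<and> x $ i < 1}"

definition P2 :: "(real ^ 'd::finite) measure set" where
  "P2 = {m. prob_space m \<and> sets m = sets borel \<and> emeasure m unit_cell = 1}"

definition couplings :: "(real ^ 'd::finite) measure \<Rightarrow> (real ^ 'd) measure
    \<Rightarrow> ((real ^ 'd) \<times> (real ^ 'd)) measure set" where
  "couplings m m' = {\<pi>. prob_space \<pi> \<and> sets \<pi> = sets (borel \<Otimes>\<^sub>M borel)
      \<and> distr \<pi> borel fst = m \<and> distr \<pi> borel snd = m'}"

definition W2 :: "(real ^ 'd::finite) measure \<Rightarrow> (real ^ 'd) measure \<Rightarrow> real" where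
  "W2 m m' = sqrt (INF \<pi> \<in> couplings m m'. integral\<^sup>L \<pi> (\<lambda>p. (tdist (fst p) (snd p))\<^sup>2))"

definition flows_R :: "real \<Rightarrow> real \<Rightarrow> (real \<Rightarrow> (real ^ 'd::finite) measure) set" where
  "flows_R T R = {m. (\<forall>t\<in>{0..T}. m t \<in> P2) \<and>
      (\<forall>t'\<in>{0..T}. \<forall>t''\<in>{0..T}. W2 (m t') (m t'') \<le> R * \<bar>t' - t''\<bar>)}"

text \<open>Relaxed controls on [0,T] with values in P(A): weakly measurable maps into the
  Borel probability measures on A (A a compact metric space, here a type).\<close>
definition relaxed_ctrl :: "real \<Rightarrow> (real \<Rightarrow> 'a::metric_space measure) \<Rightarrow> bool" where
  "relaxed_ctrl T \<xi> \<longleftrightarrow> (\<forall>t\<in>{0..T}. prob_space (\<xi> t) \<and> sets (\<xi> t) = sets borel) \<and>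
     (\<forall>g :: 'a \<Rightarrow> real. continuous_on UNIV g \<longrightarrow>
        (\<lambda>t. integral\<^sup>L (\<xi> t) g) \<in> borel_measurable (restrict_space borel {0..T}))"

definition prod_ctrl :: "(real \<Rightarrow> 'a measure) \<Rightarrow> (real \<Rightarrow> 'b measure) \<Rightarrow> real \<Rightarrow> ('a \<times> 'b) measure" where
  "prod_ctrl \<xi> \<zeta> = (\<lambda>t. \<xi> t \<Otimes>\<^sub>M \<zeta> t)"

definition dirac_ctrl :: "'a::topological_space \<Rightarrow> real \<Rightarrow> 'a measure" where
  "dirac_ctrl u = (\<lambda>t. return borel u)"

text \<open>x(.) = x(., s, y, m(.), eta): the (lifted to real^'d) Caratheodory solution on [0,T] of
  x'(t) = \<integral> f(t,x(t),m(t),u,v) eta(t, d(u,v)),  x(s) = y.\<close>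
definition is_traj ::
  "real \<Rightarrow> (real \<Rightarrow> real ^ 'd::finite \<Rightarrow> (real ^ 'd) measure \<Rightarrow> 'u \<Rightarrow> 'v \<Rightarrow> real ^ 'd)
   \<Rightarrow> real \<Rightarrow> real ^ 'd \<Rightarrow> (real \<Rightarrow> (real ^ 'd) measure) \<Rightarrow> (real \<Rightarrow> ('u \<times> 'v) measure)
   \<Rightarrow> (real \<Rightarrow> real ^ 'd) \<Rightarrow> bool" where
  "is_traj T f s y m \<eta> x \<longleftrightarrow>
     continuous_on {0..T} x \<and>
     set_integrable lborel {0..T}
        (\<lambda>\<tau>. integral\<^sup>L (\<eta> \<tau>) (\<lambda>p. f \<tau> (x \<tau>) (m \<tau>) (fst p) (snd p))) \<and>
     (\<forall>t\<in>{0..T}. x t = y + (LBINT \<tau>=s..t.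
        integral\<^sup>L (\<eta> \<tau>) (\<lambda>p. f \<tau> (x \<tau>) (m \<tau>) (fst p) (snd p))))"

definition varpi1 :: "nat \<Rightarrow> real \<Rightarrow> real \<Rightarrow> (real \<Rightarrow> real) \<Rightarrow> real \<Rightarrow> real" where
  "varpi1 d L C0 wmod \<epsilon> = 2 * sqrt (real d) * wmod \<epsilon> + 4 * sqrt (real d) * L * C0 * \<epsilon>"

definition varpi2 :: "nat \<Rightarrow> real \<Rightarrow> real \<Rightarrow> (real \<Rightarrow> real) \<Rightarrow> real \<Rightarrow> real" where
  "varpi2 d L C0 wmod \<epsilon> = 2 * varpi1 d L C0 wmod \<epsilon> + 4 * C0\<^sup>2 * \<epsilon>"

end

theory Submission
  imports Defs
begin

text \<open>
  Choose representatives x' of x* and y' of y* such that w = x' - y' realises the torus distance.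
  Up to an integer translate, x(r) - y(r) = w + \<Delta>x - \<Delta>y with \<Delta>x = x(r) - x* and
  \<Delta>y = y(r) - y*, so |x(r) - y(r)|^2 \<le> |w|^2 + 2 (w \<bullet> \<Delta>x - w \<bullet> \<Delta>y) + |\<Delta>x - \<Delta>y|^2.
  Since trajectories and flows move at speed at most C0, on [s, r] the velocity of x differs from
  f(s, x*, m(s), u*, -) by at most \<varpi>_f(r - s) + 2 L C0 (r - s), and similarly for y.
  Hence, up to these errors, w \<bullet> \<Delta>x is at most (r - s) sup_v w \<bullet> f(s, x*, m(s), u*, v) and
  w \<bullet> \<Delta>y at least (r - s) inf_u w \<bullet> f(s, y*, \<nu>(s), u, v*). By the extremal choice of u*, v* and
  the Isaacs condition the first value is at most inf_u w \<bullet> f(s, x*, m(s), u, v*), which by the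
  Lipschitz bound exceeds the second by at most |w| L (|w| + W2(m(s), \<nu>(s))). The cross term is
  absorbed by 2ab \<le> a^2 + b^2, and |\<Delta>x - \<Delta>y| \<le> 2 C0 (r - s).
\<close>

text \<open>Compact metric spaces are separable (take finite 1/(n+1)-nets), so an open subset of the
  product is a countable union of products of balls.\<close>

lemma open_in_sets_pair_borel:
  assumes "compact (UNIV :: 'a::metric_space set)" "compact (UNIV :: 'b::metric_space set)"
    and "open (G :: ('a \<times> 'b) set)"
  shows "G \<in> sets (borel \<Otimes>\<^sub>M borel)"
proof -
  obtain ka :: "real \<Rightarrow> 'a set" where ka: "\<And>e. e > 0 \<Longrightarrow> finite (ka e) \<and> UNIV \<subseteq> (\<Union>a\<in>ka e. ball a e)"
    using assms(1) unfolding compact_eq_totally_bounded by metis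
  obtain kb :: "real \<Rightarrow> 'b set" where kb: "\<And>e. e > 0 \<Longrightarrow> finite (kb e) \<and> UNIV \<subseteq> (\<Union>b\<in>kb e. ball b e)"
    using assms(2) unfolding compact_eq_totally_bounded by metis
  define \<delta> :: "nat \<Rightarrow> real" where "\<delta> n = 1 / Suc n" for n
  define box where "box = (\<lambda>(n, a, b). if ball a (\<delta> n) \<times> ball b (\<delta> n) \<subseteq> G
    then ball a (\<delta> n) \<times> ball b (\<delta> n) else {})"
  define I where "I = (\<Union>n. {n} \<times> ka (\<delta> n) \<times> kb (\<delta> n))"
  have \<delta>_pos: "0 < \<delta> n" for n
    by (simp add: \<delta>_def)
  have "G \<subseteq> \<Union> (box ` I)"
  proof
    fix p assume "p \<in> G"
    then obtain e where "e > 0" and e: "ball p e \<subseteq> G"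
      using assms(3) open_contains_ball by blast
    then obtain n where n: "\<delta> n < e / 4"
      unfolding \<delta>_def by (metis nat_approx_posE zero_less_divide_iff zero_less_numeral)
    obtain a where a: "a \<in> ka (\<delta> n)" "dist a (fst p) < \<delta> n"
      using ka[OF \<delta>_pos, of n] by fastforce
    obtain b where b: "b \<in> kb (\<delta> n)" "dist b (snd p) < \<delta> n"
      using kb[OF \<delta>_pos, of n] by fastforce
    have "ball a (\<delta> n) \<times> ball b (\<delta> n) \<subseteq> ball p e"
    proof clarify
      fix y1 y2 assume "y1 \<in> ball a (\<delta> n)" "y2 \<in> ball b (\<delta> n)"
      then have "dist (fst p) y1 < 2 * \<delta> n" "dist (snd p) y2 < 2 * \<delta> n"
        using a b dist_triangle3 by (smt (verit, best) mem_ball)+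
      moreover have "dist p (y1, y2) \<le> dist (fst p) y1 + dist (snd p) y2"
        by (metis dist_Pair_Pair prod.collapse sqrt_sum_squares_le_sum zero_le_dist)
      ultimately show "(y1, y2) \<in> ball p e"
        using n by simp
    qed
    then have "p \<in> box (n, a, b)"
      using a b e unfolding box_def by (cases p) auto
    then show "p \<in> \<Union> (box ` I)"
      using a b unfolding I_def by blast
  qed
  moreover have "\<Union> (box ` I) \<subseteq> G"
    unfolding box_def by (force split: if_splits)
  ultimately have "G = \<Union> (box ` I)"
    by (rule antisym)
  also have "\<dots> \<in> sets (borel \<Otimes>\<^sub>M borel)"
    using ka[OF \<delta>_pos] kb[OF \<delta>_pos]
    by (intro sets.countable_UN'') (auto simp: I_def box_def countable_finite)
  finally show ?thesis .
qed

lemma continuous_on_pair_borel_measurable: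
  fixes h :: "'a::metric_space \<times> 'b::metric_space \<Rightarrow> 'c::topological_space"
  assumes "compact (UNIV :: 'a set)" "compact (UNIV :: 'b set)" "continuous_on UNIV h"
  shows "h \<in> borel_measurable (borel \<Otimes>\<^sub>M borel)"
proof (rule borel_measurableI)
  fix S :: "'c set" assume "open S"
  then have "open (h -` S)"
    using assms(3) by (simp add: continuous_on_open_vimage)
  then show "h -` S \<inter> space (borel \<Otimes>\<^sub>M borel) \<in> sets (borel \<Otimes>\<^sub>M borel)"
    using open_in_sets_pair_borel[OF assms(1,2)] by (simp add: space_pair_measure)
qed

lemma int_vec_zero [simp]: "int_vec 0 = 0"
  by (simp add: int_vec_def vec_eq_iff)

lemma int_vec_diff: "int_vec (k - l) = int_vec k - int_vec l"
  by (simp add: int_vec_def vec_eq_iff)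

lemma tdist_nonneg: "0 \<le> tdist x y"
  unfolding tdist_def by (rule cINF_greatest) auto

lemma tdist_le: "tdist x y \<le> norm (x - y + int_vec k)"
  unfolding tdist_def by (rule cINF_lower) (auto intro: bdd_belowI[where m = 0])

lemma tdist_le_norm: "tdist x y \<le> norm (x - y)"
  using tdist_le[of x y 0] by simp

lemma tdist_self [simp]: "tdist x x = 0"
  using tdist_le_norm[of x x] tdist_nonneg[of x x] by simp

lemma tdist_le_sqrt_CARD: "tdist x y \<le> sqrt CARD('d)"
  for x y :: "real ^ 'd::finite"
proof -
  define k :: "int ^ 'd" where "k = (\<chi> i. - \<lfloor>(x - y) $ i\<rfloor>)"
  define z where "z = x - y + int_vec k"
  have "0 \<le> z $ i \<and> z $ i < 1" for i
    unfolding z_def k_def int_vec_def by simp linarith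
  then have "(z $ i)\<^sup>2 \<le> 1" for i
    by (metis abs_of_nonneg abs_square_le_1 less_imp_le)
  then have "norm z \<le> sqrt (\<Sum>i\<in>(UNIV :: 'd set). 1)"
    unfolding norm_vec_def L2_set_def by (intro real_sqrt_le_mono sum_mono) simp
  then show ?thesis
    using tdist_le[of x y k] unfolding z_def by simp
qed

lemma tdist_half_ge: "1 / 2 \<le> tdist (0 :: real ^ 'd::finite) (\<chi> i. 1 / 2)"
  unfolding tdist_def
proof (rule cINF_greatest)
  fix k :: "int ^ 'd" and i :: 'd
  have "1 / 2 \<le> \<bar>of_int (k $ i) - 1 / 2 :: real\<bar>"
    by (cases "k $ i \<le> 0") (auto simp: abs_if)
  also have "\<dots> = \<bar>(0 - (\<chi> i. 1 / 2) + int_vec k) $ i\<bar>"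
    by (simp add: int_vec_def)
  also have "\<dots> \<le> norm (0 - (\<chi> i. 1 / 2) + int_vec k)"
    by (rule component_le_norm_cart)
  finally show "1 / 2 \<le> norm (0 - (\<chi> i. (1 / 2 :: real)) + int_vec k)" .
qed auto

lemma W2_self:
  assumes "m \<in> P2"
  shows "W2 m m = 0"
proof -
  have sets_m: "sets m = sets borel" and "prob_space m"
    using assms by (auto simp: P2_def)
  define \<pi> where "\<pi> = distr m (borel \<Otimes>\<^sub>M borel) (\<lambda>x. (x, x))"
  have diag: "(\<lambda>x. (x, x)) \<in> m \<rightarrow>\<^sub>M borel \<Otimes>\<^sub>M borel"
    using measurable_ident_sets[OF sets_m] by (intro measurable_Pair) auto
  have "\<pi> \<in> couplings m m"
    using \<open>prob_space m\<close> sets_m unfolding couplings_def \<pi>_def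
    by (simp add: prob_space.prob_space_distr[OF _ diag] distr_distr[OF _ diag] comp_def distr_id2)
  moreover have "integral\<^sup>L \<pi> (\<lambda>p. (tdist (fst p) (snd p))\<^sup>2) = 0"
  proof (rule integral_eq_zero_AE)
    have "{p. fst p = snd p} \<in> sets (borel \<Otimes>\<^sub>M borel :: ((real ^ 'd) \<times> (real ^ 'd)) measure)"
      unfolding borel_prod by (intro borel_closed closed_Collect_eq continuous_intros)
    then have "AE p in \<pi>. fst p = snd p"
      unfolding \<pi>_def by (subst AE_distr_iff[OF diag]) (auto simp: space_pair_measure)
    then show "AE p in \<pi>. (tdist (fst p) (snd p))\<^sup>2 = 0"
      by eventually_elim simp
  qed
  moreover have "0 \<le> integral\<^sup>L \<pi>' (\<lambda>p. (tdist (fst p) (snd p))\<^sup>2)"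
    for \<pi>' :: "((real ^ 'd) \<times> (real ^ 'd)) measure"
    by (rule integral_nonneg_AE) simp
  ultimately have "(INF \<pi>\<in>couplings m m. integral\<^sup>L \<pi> (\<lambda>p. (tdist (fst p) (snd p))\<^sup>2)) = 0"
    by (intro cInf_eq_minimum) auto
  then show ?thesis
    by (simp add: W2_def)
qed

lemma AE_return_borel_eq: "AE x in return borel (a :: 'a::metric_space). x = a"
  by (rule AE_return[THEN iffD2]) (auto simp: pred_def)

lemma AE_fst_return_pair:
  assumes "prob_space N"
  shows "AE p in return borel (a :: 'a::metric_space) \<Otimes>\<^sub>M N. fst p = a"
proof -
  interpret pair_sigma_finite "return borel a" N
    using assms unfolding pair_sigma_finite_def
    by (auto intro!: prob_space_imp_sigma_finite prob_space_return)
  have "{p \<in> space (return borel a \<Otimes>\<^sub>M N). fst p = a} = {a} \<times> space N"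
    by (auto simp: space_pair_measure)
  then show ?thesis
    using AE_return_borel_eq[of a]
    by (intro AE_pair_measure) (auto intro: pair_measureI elim!: eventually_mono)
qed

lemma AE_snd_pair_return:
  assumes "prob_space N"
  shows "AE p in N \<Otimes>\<^sub>M return borel (a :: 'a::metric_space). snd p = a"
proof -
  interpret pair_sigma_finite N "return borel a"
    using assms unfolding pair_sigma_finite_def
    by (auto intro!: prob_space_imp_sigma_finite prob_space_return)
  have "{p \<in> space (N \<Otimes>\<^sub>M return borel a). snd p = a} = space N \<times> {a}"
    by (auto simp: space_pair_measure)
  then show ?thesis
    using AE_return_borel_eq[of a]
    by (intro AE_pair_measure) (auto intro: pair_measureI)
qed

lemma inner_le_inner_add_norm_mult:
  fixes w a b :: "'a::real_inner"
  shows "w \<bullet> a \<le> w \<bullet> b + norm w * norm (a - b)"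
  using norm_cauchy_schwarz[of w "a - b"] by (simp add: inner_diff_right)

lemma set_integral_inner_right:
  fixes F :: "'a \<Rightarrow> 'b::euclidean_space"
  assumes "set_integrable M S F"
  shows "set_integrable M S (\<lambda>t. w \<bullet> F t)" and "(LINT t:S|M. w \<bullet> F t) = w \<bullet> (LINT t:S|M. F t)"
  using integrable_inner_right[OF assms[unfolded set_integrable_def], of w]
    integral_inner_right[of w M "\<lambda>t. indicator S t *\<^sub>R F t"] assms
  by (simp_all add: set_integrable_def set_lebesgue_integral_def)

lemma set_integral_Icc_le_const:
  fixes g :: "real \<Rightarrow> real"
  assumes "set_integrable lborel {a..b} g" "a \<le> b" "\<And>t. t \<in> {a..b} \<Longrightarrow> g t \<le> c"
  shows "(LINT t:{a..b}|lborel. g t) \<le> c * (b - a)"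
proof -
  have "set_integrable lborel {a..b} (\<lambda>_. c)"
    unfolding set_integrable_def by (simp add: emeasure_lborel_Icc_eq)
  then have "(LINT t:{a..b}|lborel. g t) \<le> (LINT t:{a..b}|lborel. c)"
    by (rule set_integral_mono[OF assms(1) _ assms(3)])
  also have "\<dots> = c * (b - a)"
    using assms(2) by (simp add: set_integral_const)
  finally show ?thesis .
qed

lemma inner_set_integral_Icc_le:
  fixes F :: "real \<Rightarrow> 'b::euclidean_space"
  assumes "set_integrable lborel {a..b} F" "a \<le> b" "\<And>t. t \<in> {a..b} \<Longrightarrow> w \<bullet> F t \<le> c"
  shows "w \<bullet> (LINT t:{a..b}|lborel. F t) \<le> c * (b - a)"
  using set_integral_Icc_le_const[OF set_integral_inner_right(1)[OF assms(1)] assms(2,3)]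
  by (simp add: set_integral_inner_right(2)[OF assms(1)])

lemma norm_set_integral_Icc_le:
  fixes F :: "real \<Rightarrow> 'b::euclidean_space"
  assumes "set_integrable lborel {a..b} F" "a \<le> b" "\<And>t. t \<in> {a..b} \<Longrightarrow> norm (F t) \<le> C"
  shows "norm (LINT t:{a..b}|lborel. F t) \<le> C * (b - a)"
  using set_integral_norm_bound[OF assms(1)]
    set_integral_Icc_le_const[OF set_integrable_norm[OF assms(1)] assms(2,3)]
  by linarith

lemma isaacs_extremal_le:
  fixes \<phi> :: "'u \<Rightarrow> 'v \<Rightarrow> real"
  assumes "(INF u. SUP v. \<phi> u v) = (SUP v. INF u. \<phi> u v)"
    and "\<And>u. (SUP v. \<phi> u0 v) \<le> (SUP v. \<phi> u v)"
    and "\<And>v. (INF u. \<phi> u v) \<le> (INF u. \<phi> u v0)"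
  shows "(SUP v. \<phi> u0 v) \<le> (INF u. \<phi> u v0)"
proof -
  have "(SUP v. \<phi> u0 v) \<le> (INF u. SUP v. \<phi> u v)"
    by (intro cINF_greatest assms(2)) auto
  also have "\<dots> = (SUP v. INF u. \<phi> u v)"
    by (fact assms(1))
  also have "\<dots> \<le> (INF u. \<phi> u v0)"
    by (intro cSUP_least assms(3)) auto
  finally show ?thesis .
qed

lemma sq_norm_add_diff_le:
  fixes w a b :: "'a::real_inner"
  assumes a: "w \<bullet> a \<le> (S + norm w * E) * e"
    and b: "(I' - norm w * E) * e \<le> w \<bullet> b"
    and "S \<le> I" and "I - norm w * (L * norm w + L * W) \<le> I'"
    and "norm (a - b) \<le> 2 * C0 * e" and "norm w \<le> D"
    and "0 \<le> L" and "0 \<le> E" and "0 \<le> e"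
  shows "(norm (w + (a - b)))\<^sup>2
    \<le> (norm w)\<^sup>2 * (1 + 3 * L * e) + L * W\<^sup>2 * e + (4 * D * E + 4 * C0\<^sup>2 * e) * e"
proof -
  have "(S - I') * e \<le> norm w * (L * norm w + L * W) * e"
    using assms(3,4,9) by (intro mult_right_mono) auto
  then have 1: "w \<bullet> a - w \<bullet> b \<le> (norm w * (L * norm w + L * W) + 2 * norm w * E) * e"
    using a b by (simp add: algebra_simps)
  have "0 \<le> L * (norm w - W)\<^sup>2 * e"
    using assms(7,9) by simp
  then have 2: "2 * L * norm w * W * e \<le> (L * (norm w)\<^sup>2 + L * W\<^sup>2) * e"
    by (simp add: algebra_simps power2_eq_square)
  have "(norm (a - b))\<^sup>2 \<le> (2 * C0 * e)\<^sup>2"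
    using assms(5) by (intro power_mono) auto
  then have 3: "(norm (a - b))\<^sup>2 \<le> 4 * C0\<^sup>2 * e * e"
    by (simp add: power2_eq_square algebra_simps)
  have "(norm (w + (a - b)))\<^sup>2 = (norm w)\<^sup>2 + 2 * (w \<bullet> a - w \<bullet> b) + (norm (a - b))\<^sup>2"
    by (simp add: power2_norm_eq_inner inner_add_left inner_add_right inner_diff_left
        inner_diff_right inner_commute algebra_simps)
  moreover have "norm w * E * e \<le> D * E * e"
    using assms(6,8,9) by (intro mult_right_mono) auto
  ultimately show ?thesis
    using 1 2 3 by (simp add: algebra_simps power2_eq_square)
qed

locale mf_control_system =
  fixes T L C0 :: real and wmod :: "real \<Rightarrow> real"
    and f :: "real \<Rightarrow> real ^ 'd::finite \<Rightarrow> (real ^ 'd) measure \<Rightarrow> 'u::metric_space \<Rightarrow> 'v::metric_space \<Rightarrow> real ^ 'd"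
  assumes U_compact: "compact (UNIV :: 'u set)"
    and V_compact: "compact (UNIV :: 'v set)"
    and f_cont: "\<And>tn xn mn un vn t x0 m0 u v.
        (\<forall>n. tn n \<in> {0..T} \<and> mn n \<in> P2) \<Longrightarrow> t \<in> {0..T} \<Longrightarrow> m0 \<in> P2 \<Longrightarrow>
        tn \<longlonglongrightarrow> t \<Longrightarrow> (\<lambda>n. tdist (xn n) x0) \<longlonglongrightarrow> 0 \<Longrightarrow>
        (\<lambda>n. W2 (mn n) m0) \<longlonglongrightarrow> 0 \<Longrightarrow> un \<longlonglongrightarrow> u \<Longrightarrow> vn \<longlonglongrightarrow> v \<Longrightarrow>
        (\<lambda>n. f (tn n) (xn n) (mn n) (un n) (vn n)) \<longlonglongrightarrow> f t x0 m0 u v"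
    and f_lip: "\<And>t x1 x2 m1 m2 u v. t \<in> {0..T} \<Longrightarrow> m1 \<in> P2 \<Longrightarrow> m2 \<in> P2 \<Longrightarrow>
        norm (f t x1 m1 u v - f t x2 m2 u v) \<le> L * tdist x1 x2 + L * W2 m1 m2"
    and C0_bound: "\<And>t x0 m0 u v. t \<in> {0..T} \<Longrightarrow> m0 \<in> P2 \<Longrightarrow> norm (f t x0 m0 u v) \<le> C0"
    and wmod_nonneg: "\<And>e. wmod e \<ge> 0"
    and wmod_mono: "mono_on {0..} wmod"
    and wmod_mod: "\<And>t t' x0 m0 u v. t \<in> {0..T} \<Longrightarrow> t' \<in> {0..T} \<Longrightarrow> m0 \<in> P2 \<Longrightarrow>
        norm (f t x0 m0 u v - f t' x0 m0 u v) \<le> wmod (t - t')"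
begin

definition admissible_ctrl :: "(real \<Rightarrow> ('u \<times> 'v) measure) \<Rightarrow> bool" where
  "admissible_ctrl \<eta> \<longleftrightarrow> (\<forall>t\<in>{0..T}. prob_space (\<eta> t) \<and> sets (\<eta> t) = sets (borel \<Otimes>\<^sub>M borel))"

definition drift ::
    "(real \<Rightarrow> ('u \<times> 'v) measure) \<Rightarrow> (real \<Rightarrow> real ^ 'd) \<Rightarrow> (real \<Rightarrow> (real ^ 'd) measure) \<Rightarrow> real \<Rightarrow> real ^ 'd"
  where "drift \<eta> x \<mu> t = integral\<^sup>L (\<eta> t) (\<lambda>p. f t (x t) (\<mu> t) (fst p) (snd p))"

text \<open>With d = CARD('d), the paper's \<varpi>_1 is 2 sqrt d \<cdot> f_modulus.\<close>

definition f_modulus :: "real \<Rightarrow> real" where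
  "f_modulus \<epsilon> = wmod \<epsilon> + 2 * L * C0 * \<epsilon>"

lemma varpi2_eq: "varpi2 CARD('d) L C0 wmod \<epsilon> = 4 * sqrt CARD('d) * f_modulus \<epsilon> + 4 * C0\<^sup>2 * \<epsilon>"
  by (simp add: varpi2_def varpi1_def f_modulus_def algebra_simps)

lemma C0_nonneg:
  assumes "t \<in> {0..T}" "(m0 :: (real ^ 'd) measure) \<in> P2"
  shows "0 \<le> C0"
  using order_trans[OF norm_ge_zero C0_bound[OF assms, of 0 undefined undefined]] .

lemma L_nonneg:
  assumes "t \<in> {0..T}" "(m0 :: (real ^ 'd) measure) \<in> P2"
  shows "0 \<le> L"
proof -
  let ?h = "\<chi> i. 1 / 2 :: real ^ 'd"
  have "norm (f t 0 m0 undefined undefined - f t ?h m0 undefined undefined)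
      \<le> L * tdist 0 ?h + L * W2 m0 m0"
    by (rule f_lip[OF assms(1,2,2)])
  then have "0 \<le> L * tdist 0 ?h"
    using order_trans[OF norm_ge_zero] by (simp add: W2_self[OF assms(2)])
  moreover have "0 < tdist (0 :: real ^ 'd) ?h"
    using tdist_half_ge[where 'd = 'd] by linarith
  ultimately show ?thesis
    by (simp add: zero_le_mult_iff)
qed

lemma f_modulus_nonneg:
  assumes "t \<in> {0..T}" "(m0 :: (real ^ 'd) measure) \<in> P2" "0 \<le> \<epsilon>"
  shows "0 \<le> f_modulus \<epsilon>"
  unfolding f_modulus_def
  using wmod_nonneg[of \<epsilon>] L_nonneg[OF assms(1,2)] C0_nonneg[OF assms(1,2)] assms(3) by simp

lemma f_controls_continuous:
  assumes "t \<in> {0..T}" "m0 \<in> P2"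
  shows "continuous_on UNIV (\<lambda>p. f t x0 m0 (fst p) (snd p))"
proof (rule continuous_on_sequentiallyI)
  fix q :: "nat \<Rightarrow> 'u \<times> 'v" and p
  assume "q \<longlonglongrightarrow> p"
  then show "(\<lambda>n. f t x0 m0 (fst (q n)) (snd (q n))) \<longlonglongrightarrow> f t x0 m0 (fst p) (snd p)"
    using f_cont[of "\<lambda>_. t" "\<lambda>_. m0" t m0 "\<lambda>_. x0" x0 "\<lambda>n. fst (q n)" "fst p" "\<lambda>n. snd (q n)" "snd p"] assms
    by (simp add: W2_self tendsto_fst tendsto_snd)
qed

lemma integrable_f_controls:
  assumes "t \<in> {0..T}" "m0 \<in> P2" "prob_space M" "sets M = sets (borel \<Otimes>\<^sub>M borel)"
  shows "integrable M (\<lambda>p. f t x0 m0 (fst p) (snd p))"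
proof -
  interpret prob_space M by fact
  have "(\<lambda>p. f t x0 m0 (fst p) (snd p)) \<in> borel_measurable M"
    using continuous_on_pair_borel_measurable[OF U_compact V_compact f_controls_continuous[OF assms(1,2)]]
    by (simp add: measurable_cong_sets[OF assms(4) refl])
  then show ?thesis
    using C0_bound[OF assms(1,2)] by (intro integrable_const_bound[where B = C0]) auto
qed

lemma norm_drift_le:
  assumes "admissible_ctrl \<eta>" "t \<in> {0..T}" "\<mu> t \<in> P2"
  shows "norm (drift \<eta> x \<mu> t) \<le> C0"
proof -
  interpret prob_space "\<eta> t"
    using assms(1,2) by (simp add: admissible_ctrl_def)
  have "norm (drift \<eta> x \<mu> t) \<le> (\<integral>p. norm (f t (x t) (\<mu> t) (fst p) (snd p)) \<partial>\<eta> t)"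
    unfolding drift_def by (rule integral_norm_bound)
  also have "\<dots> \<le> C0"
    using assms integrable_f_controls C0_bound by (intro integral_le_const) (auto simp: admissible_ctrl_def)
  finally show ?thesis .
qed

lemma inner_drift_le:
  assumes "admissible_ctrl \<eta>" "t \<in> {0..T}" "\<mu> t \<in> P2"
    and "AE p in \<eta> t. w \<bullet> f t (x t) (\<mu> t) (fst p) (snd p) \<le> c"
  shows "w \<bullet> drift \<eta> x \<mu> t \<le> c"
proof -
  interpret prob_space "\<eta> t"
    using assms(1,2) by (simp add: admissible_ctrl_def)
  have "integrable (\<eta> t) (\<lambda>p. f t (x t) (\<mu> t) (fst p) (snd p))"
    using assms(1-3) integrable_f_controls by (simp add: admissible_ctrl_def)
  then have "w \<bullet> drift \<eta> x \<mu> t = (\<integral>p. w \<bullet> f t (x t) (\<mu> t) (fst p) (snd p) \<partial>\<eta> t)"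
    by (simp add: drift_def)
  also have "\<dots> \<le> c"
    using \<open>integrable _ _\<close> assms(4) by (intro integral_le_const) auto
  finally show ?thesis .
qed

lemma abs_inner_f_le:
  assumes "t \<in> {0..T}" "m0 \<in> P2"
  shows "\<bar>w \<bullet> f t x0 m0 u v\<bar> \<le> norm w * C0"
  using Cauchy_Schwarz_ineq2[of w "f t x0 m0 u v"] C0_bound[OF assms]
  by (meson mult_left_mono norm_ge_zero order_trans)

lemma inner_f_le_SUP:
  assumes "t \<in> {0..T}" "m0 \<in> P2"
  shows "w \<bullet> f t x0 m0 u v \<le> (SUP v. w \<bullet> f t x0 m0 u v)"
  using abs_inner_f_le[OF assms]
  by (intro cSUP_upper bdd_aboveI2[where M = "norm w * C0"]) (auto simp: abs_le_iff)

lemma INF_le_inner_f: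
  assumes "t \<in> {0..T}" "m0 \<in> P2"
  shows "(INF u. w \<bullet> f t x0 m0 u v) \<le> w \<bullet> f t x0 m0 u v"
proof -
  have "- (norm w * C0) \<le> w \<bullet> f t x0 m0 u' v" for u'
    using abs_inner_f_le[OF assms, of w x0 u' v] by linarith
  then show ?thesis
    by (intro cINF_lower bdd_belowI2) auto
qed

lemma INF_inner_f_shift:
  assumes "t \<in> {0..T}" "m1 \<in> P2" "m2 \<in> P2"
  shows "(INF u. w \<bullet> f t x1 m1 u v) - norm w * (L * tdist x1 x2 + L * W2 m1 m2)
    \<le> (INF u. w \<bullet> f t x2 m2 u v)"
proof (rule cINF_greatest)
  fix u
  have "(INF u. w \<bullet> f t x1 m1 u v) \<le> w \<bullet> f t x1 m1 u v"
    by (rule INF_le_inner_f[OF assms(1,2)])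
  also have "\<dots> \<le> w \<bullet> f t x2 m2 u v + norm w * norm (f t x1 m1 u v - f t x2 m2 u v)"
    by (rule inner_le_inner_add_norm_mult)
  also have "\<dots> \<le> w \<bullet> f t x2 m2 u v + norm w * (L * tdist x1 x2 + L * W2 m1 m2)"
    by (intro add_left_mono mult_left_mono f_lip assms norm_ge_zero)
  finally show "(INF u. w \<bullet> f t x1 m1 u v) - norm w * (L * tdist x1 x2 + L * W2 m1 m2)
      \<le> w \<bullet> f t x2 m2 u v"
    by simp
qed simp

lemma norm_f_diff_le_f_modulus:
  assumes "0 \<le> s" "s \<le> t" "t \<le> r" "r \<le> T" "\<mu> \<in> flows_R T C0" "tdist z z0 \<le> C0 * (r - s)"
  shows "norm (f t z (\<mu> t) u v - f s z0 (\<mu> s) u v) \<le> f_modulus (r - s)"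
proof -
  have st: "s \<in> {0..T}" "t \<in> {0..T}"
    using assms by auto
  have \<mu>: "\<mu> t \<in> P2" "\<mu> s \<in> P2" "W2 (\<mu> t) (\<mu> s) \<le> C0 * \<bar>t - s\<bar>"
    using assms(5) st by (auto simp: flows_R_def)
  have "norm (f t z (\<mu> t) u v - f s z0 (\<mu> s) u v)
      \<le> norm (f t z (\<mu> t) u v - f s z (\<mu> t) u v) + norm (f s z (\<mu> t) u v - f s z0 (\<mu> s) u v)"
    using norm_triangle_ineq[of "f t z (\<mu> t) u v - f s z (\<mu> t) u v" "f s z (\<mu> t) u v - f s z0 (\<mu> s) u v"]
    by simp
  also have "\<dots> \<le> wmod (t - s) + (L * tdist z z0 + L * W2 (\<mu> t) (\<mu> s))"
    by (intro add_mono wmod_mod f_lip st \<mu>)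
  also have "\<dots> \<le> wmod (r - s) + (L * (C0 * (r - s)) + L * (C0 * (r - s)))"
  proof (intro add_mono mult_left_mono L_nonneg[OF st(1) \<mu>(2)])
    show "wmod (t - s) \<le> wmod (r - s)"
      using assms(2,3) by (intro mono_onD[OF wmod_mono]) auto
    show "W2 (\<mu> t) (\<mu> s) \<le> C0 * (r - s)"
      using \<mu>(3) assms(2,3) C0_nonneg[OF st(1) \<mu>(2)] by (smt (verit) mult_left_mono)
  qed (fact assms(6))
  finally show ?thesis
    by (simp add: f_modulus_def algebra_simps)
qed

lemma traj_eq_set_integral:
  assumes "is_traj T f s x0 \<mu> \<eta> x" "0 \<le> s" "s \<le> t" "t \<le> T"
  shows "set_integrable lborel {s..t} (drift \<eta> x \<mu>)"
    and "x t = x0 + (LINT \<tau>:{s..t}|lborel. drift \<eta> x \<mu> \<tau>)"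
proof -
  have drift_eq: "drift \<eta> x \<mu> = (\<lambda>\<tau>. integral\<^sup>L (\<eta> \<tau>) (\<lambda>p. f \<tau> (x \<tau>) (\<mu> \<tau>) (fst p) (snd p)))"
    by (simp add: fun_eq_iff drift_def)
  have int: "set_integrable lborel {0..T} (drift \<eta> x \<mu>)"
    and eq: "\<forall>t\<in>{0..T}. x t = x0 + (LBINT \<tau>=s..t. drift \<eta> x \<mu> \<tau>)"
    using assms(1) unfolding is_traj_def drift_eq by blast+
  show "set_integrable lborel {s..t} (drift \<eta> x \<mu>)"
    using assms(2,4) by (intro set_integrable_subset[OF int]) auto
  have "t \<in> {0..T}"
    using assms(2-4) by simp
  from eq[rule_format, OF this] show "x t = x0 + (LINT \<tau>:{s..t}|lborel. drift \<eta> x \<mu> \<tau>)"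
    by (simp only: interval_integral_Icc[OF assms(3)])
qed

lemma traj_norm_diff_le:
  assumes "is_traj T f s x0 \<mu> \<eta> x" "admissible_ctrl \<eta>" "\<mu> \<in> flows_R T C0" "0 \<le> s" "s \<le> t" "t \<le> T"
  shows "norm (x t - x0) \<le> C0 * (t - s)"
proof -
  have "norm (drift \<eta> x \<mu> \<tau>) \<le> C0" if "\<tau> \<in> {s..t}" for \<tau>
    using that assms(3-6) by (intro norm_drift_le[OF assms(2)]) (auto simp: flows_R_def)
  then show ?thesis
    using norm_set_integral_Icc_le[OF traj_eq_set_integral(1)[OF assms(1,4-6)] assms(5)]
      traj_eq_set_integral(2)[OF assms(1,4-6)]
    by simp
qed

lemma traj_inner_le:
  assumes traj: "is_traj T f s x0 \<mu> \<eta> x" and "admissible_ctrl \<eta>" "\<mu> \<in> flows_R T C0"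
    and "0 \<le> s" "s \<le> r" "r \<le> T"
    and AE: "\<And>t. t \<in> {s..r} \<Longrightarrow> AE p in \<eta> t. w \<bullet> f s x0 (\<mu> s) (fst p) (snd p) \<le> c"
  shows "w \<bullet> (x r - x0) \<le> (c + norm w * f_modulus (r - s)) * (r - s)"
proof -
  have "w \<bullet> drift \<eta> x \<mu> t \<le> c + norm w * f_modulus (r - s)" if t: "t \<in> {s..r}" for t
  proof -
    have "t \<in> {0..T}" "\<mu> t \<in> P2"
      using t assms(3-6) by (auto simp: flows_R_def)
    have "tdist (x t) x0 \<le> C0 * (t - s)"
      using tdist_le_norm order_trans traj_norm_diff_le[OF traj assms(2,3,4)] t assms(6) by fastforce
    also have "\<dots> \<le> C0 * (r - s)"
      using t C0_nonneg[OF \<open>t \<in> {0..T}\<close> \<open>\<mu> t \<in> P2\<close>] by (intro mult_left_mono) auto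
    finally have close: "tdist (x t) x0 \<le> C0 * (r - s)" .
    from AE[OF t] have ae: "AE p in \<eta> t. w \<bullet> f t (x t) (\<mu> t) (fst p) (snd p) \<le> c + norm w * f_modulus (r - s)"
    proof eventually_elim
      case (elim p)
      have "w \<bullet> f t (x t) (\<mu> t) (fst p) (snd p) \<le> w \<bullet> f s x0 (\<mu> s) (fst p) (snd p)
          + norm w * norm (f t (x t) (\<mu> t) (fst p) (snd p) - f s x0 (\<mu> s) (fst p) (snd p))"
        by (rule inner_le_inner_add_norm_mult)
      also have "\<dots> \<le> c + norm w * f_modulus (r - s)"
        using elim norm_f_diff_le_f_modulus[OF assms(4) _ _ assms(6,3) close] t
        by (intro add_mono mult_left_mono) auto
      finally show ?case .
    qed
    show ?thesis
      by (rule inner_drift_le[where t = t and \<mu> = \<mu> and x = x, OF assms(2) \<open>t \<in> {0..T}\<close> \<open>\<mu> t \<in> P2\<close> ae])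
  qed
  then show ?thesis
    using inner_set_integral_Icc_le[OF traj_eq_set_integral(1)[OF traj assms(4,5,6)] assms(5)]
      traj_eq_set_integral(2)[OF traj assms(4,5,6)]
    by simp
qed

lemma traj_inner_ge:
  assumes "is_traj T f s x0 \<mu> \<eta> x" "admissible_ctrl \<eta>" "\<mu> \<in> flows_R T C0" "0 \<le> s" "s \<le> r" "r \<le> T"
    and "\<And>t. t \<in> {s..r} \<Longrightarrow> AE p in \<eta> t. c \<le> w \<bullet> f s x0 (\<mu> s) (fst p) (snd p)"
  shows "(c - norm w * f_modulus (r - s)) * (r - s) \<le> w \<bullet> (x r - x0)"
proof -
  have "(- w) \<bullet> (x r - x0) \<le> (- c + norm (- w) * f_modulus (r - s)) * (r - s)"
    using assms(7) by (intro traj_inner_le[OF assms(1-6)]) (auto elim!: eventually_mono)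
  then show ?thesis
    by (simp add: algebra_simps)
qed

lemma admissible_prod_ctrl:
  assumes "\<And>t. t \<in> {0..T} \<Longrightarrow> prob_space (\<xi> t) \<and> sets (\<xi> t) = sets borel"
    and "\<And>t. t \<in> {0..T} \<Longrightarrow> prob_space (\<zeta> t) \<and> sets (\<zeta> t) = sets borel"
  shows "admissible_ctrl (prod_ctrl \<xi> \<zeta>)"
  using assms unfolding admissible_ctrl_def prod_ctrl_def
  by (auto intro: prob_space_pair sets_pair_measure_cong)

lemma admissible_dirac_prod_ctrl: "relaxed_ctrl T \<zeta> \<Longrightarrow> admissible_ctrl (prod_ctrl (dirac_ctrl u) \<zeta>)"
  by (intro admissible_prod_ctrl) (auto simp: relaxed_ctrl_def dirac_ctrl_def prob_space_return)

lemma admissible_prod_dirac_ctrl: "relaxed_ctrl T \<xi> \<Longrightarrow> admissible_ctrl (prod_ctrl \<xi> (dirac_ctrl v))"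
  by (intro admissible_prod_ctrl) (auto simp: relaxed_ctrl_def dirac_ctrl_def prob_space_return)

lemma traj_dirac_fst_inner_le:
  assumes "is_traj T f s x0 \<mu> (prod_ctrl (dirac_ctrl u0) \<zeta>) x" "relaxed_ctrl T \<zeta>"
    and "\<mu> \<in> flows_R T C0" "0 \<le> s" "s \<le> r" "r \<le> T"
  shows "w \<bullet> (x r - x0) \<le> ((SUP v. w \<bullet> f s x0 (\<mu> s) u0 v) + norm w * f_modulus (r - s)) * (r - s)"
proof (rule traj_inner_le[OF assms(1) _ assms(3-6)])
  show "admissible_ctrl (prod_ctrl (dirac_ctrl u0) \<zeta>)"
    by (rule admissible_dirac_prod_ctrl[OF assms(2)])
  fix t assume "t \<in> {s..r}"
  then have "prob_space (\<zeta> t)"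
    using assms(2,4,6) by (auto simp: relaxed_ctrl_def)
  moreover have "s \<in> {0..T}" "\<mu> s \<in> P2"
    using assms(3-6) by (auto simp: flows_R_def)
  ultimately show "AE p in prod_ctrl (dirac_ctrl u0) \<zeta> t.
      w \<bullet> f s x0 (\<mu> s) (fst p) (snd p) \<le> (SUP v. w \<bullet> f s x0 (\<mu> s) u0 v)"
    unfolding prod_ctrl_def dirac_ctrl_def
    by (auto elim!: eventually_mono[OF AE_fst_return_pair] intro: inner_f_le_SUP)
qed

lemma traj_dirac_snd_inner_ge:
  assumes "is_traj T f s x0 \<mu> (prod_ctrl \<xi> (dirac_ctrl v0)) x" "relaxed_ctrl T \<xi>"
    and "\<mu> \<in> flows_R T C0" "0 \<le> s" "s \<le> r" "r \<le> T"
  shows "((INF u. w \<bullet> f s x0 (\<mu> s) u v0) - norm w * f_modulus (r - s)) * (r - s) \<le> w \<bullet> (x r - x0)"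
proof (rule traj_inner_ge[OF assms(1) _ assms(3-6)])
  show "admissible_ctrl (prod_ctrl \<xi> (dirac_ctrl v0))"
    by (rule admissible_prod_dirac_ctrl[OF assms(2)])
  fix t assume "t \<in> {s..r}"
  then have "prob_space (\<xi> t)"
    using assms(2,4,6) by (auto simp: relaxed_ctrl_def)
  moreover have "s \<in> {0..T}" "\<mu> s \<in> P2"
    using assms(3-6) by (auto simp: flows_R_def)
  ultimately show "AE p in prod_ctrl \<xi> (dirac_ctrl v0) t.
      (INF u. w \<bullet> f s x0 (\<mu> s) u v0) \<le> w \<bullet> f s x0 (\<mu> s) (fst p) (snd p)"
    unfolding prod_ctrl_def dirac_ctrl_def
    by (auto elim!: eventually_mono[OF AE_snd_pair_return] intro: INF_le_inner_f)
qed

end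


theorem lemma1:
  fixes f :: "real \<Rightarrow> real ^ 'd::finite \<Rightarrow> (real ^ 'd) measure \<Rightarrow> 'u::metric_space \<Rightarrow> 'v::metric_space \<Rightarrow> real ^ 'd"
    and T L C0 :: real and wmod :: "real \<Rightarrow> real"
    and s r :: real and xs ys :: "real ^ 'd"
    and m \<nu> :: "real \<Rightarrow> (real ^ 'd) measure"
    and us :: 'u and vs :: 'v
    and \<xi> :: "real \<Rightarrow> 'u measure" and \<zeta> :: "real \<Rightarrow> 'v measure"
    and x y :: "real \<Rightarrow> real ^ 'd"
  assumes T_pos: "T > 0"
    and U_compact: "compact (UNIV :: 'u set)"
    and V_compact: "compact (UNIV :: 'v set)"
    and f_cont: "\<And>tn xn mn un vn t x0 m0 u v.
        (\<forall>n. tn n \<in> {0..T} \<and> mn n \<in> P2) \<Longrightarrow> t \<in> {0..T} \<Longrightarrow> m0 \<in> P2 \<Longrightarrow>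
        tn \<longlonglongrightarrow> t \<Longrightarrow> (\<lambda>n. tdist (xn n) x0) \<longlonglongrightarrow> 0 \<Longrightarrow>
        (\<lambda>n. W2 (mn n) m0) \<longlonglongrightarrow> 0 \<Longrightarrow> un \<longlonglongrightarrow> u \<Longrightarrow> vn \<longlonglongrightarrow> v \<Longrightarrow>
        (\<lambda>n. f (tn n) (xn n) (mn n) (un n) (vn n)) \<longlonglongrightarrow> f t x0 m0 u v"
    and f_lip: "\<And>t x1 x2 m1 m2 u v. t \<in> {0..T} \<Longrightarrow> m1 \<in> P2 \<Longrightarrow> m2 \<in> P2 \<Longrightarrow>
        norm (f t x1 m1 u v - f t x2 m2 u v) \<le> L * tdist x1 x2 + L * W2 m1 m2"
    and isaacs: "\<And>t x0 m0 w. t \<in> {0..T} \<Longrightarrow> m0 \<in> P2 \<Longrightarrow>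
        (INF u. SUP v. inner w (f t x0 m0 u v)) = (SUP v. INF u. inner w (f t x0 m0 u v))"
    and C0_bound: "\<And>t x0 m0 u v. t \<in> {0..T} \<Longrightarrow> m0 \<in> P2 \<Longrightarrow> norm (f t x0 m0 u v) \<le> C0"
    and wmod_even: "\<And>e. wmod (- e) = wmod e"
    and wmod_nonneg: "\<And>e. wmod e \<ge> 0"
    and wmod_mono: "mono_on {0..} wmod"
    and wmod_zero: "wmod 0 = 0"
    and wmod_cont: "isCont wmod 0"
    and wmod_mod: "\<And>t t' x0 m0 u v. t \<in> {0..T} \<Longrightarrow> t' \<in> {0..T} \<Longrightarrow> m0 \<in> P2 \<Longrightarrow>
        norm (f t x0 m0 u v - f t' x0 m0 u v) \<le> wmod (t - t')"
    and s_r: "0 \<le> s" "s \<le> r" "r \<le> T"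
    and m_in: "m \<in> flows_R T C0"
    and \<nu>_in: "\<nu> \<in> flows_R T C0"
    and extremal: "\<exists>xr yr :: real ^ 'd.
        (\<exists>k. xr = xs + int_vec k) \<and> (\<exists>k. yr = ys + int_vec k) \<and>
        norm (xr - yr) = tdist xs ys \<and>
        (\<forall>u. (SUP v. inner (xr - yr) (f s xs (m s) us v))
              \<le> (SUP v. inner (xr - yr) (f s xs (m s) u v))) \<and>
        (\<forall>v. (INF u. inner (xr - yr) (f s xs (m s) u v))
              \<le> (INF u. inner (xr - yr) (f s xs (m s) u vs)))"
    and \<xi>_ctrl: "relaxed_ctrl T \<xi>"
    and \<zeta>_ctrl: "relaxed_ctrl T \<zeta>"
    and x_traj: "is_traj T f s xs m (prod_ctrl (dirac_ctrl us) \<zeta>) x"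
    and y_traj: "is_traj T f s ys \<nu> (prod_ctrl \<xi> (dirac_ctrl vs)) y"
  shows "(tdist (x r) (y r))\<^sup>2 \<le> (tdist xs ys)\<^sup>2 * (1 + 3 * L * (r - s))
           + L * (W2 (m s) (\<nu> s))\<^sup>2 * (r - s)
           + varpi2 CARD('d) L C0 wmod (r - s) * (r - s)"
proof -
  interpret mf_control_system T L C0 wmod f
    by unfold_locales (fact U_compact V_compact f_cont f_lip C0_bound wmod_nonneg wmod_mono wmod_mod)+
  have sT: "s \<in> {0..T}" and mP: "m s \<in> P2" and \<nu>P: "\<nu> s \<in> P2"
    using s_r m_in \<nu>_in by (auto simp: flows_R_def)
  obtain xr yr k1 k2 where xr: "xr = xs + int_vec k1" and yr: "yr = ys + int_vec k2"
    and nw: "norm (xr - yr) = tdist xs ys"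
    and ext1: "\<And>u. (SUP v. (xr - yr) \<bullet> f s xs (m s) us v) \<le> (SUP v. (xr - yr) \<bullet> f s xs (m s) u v)"
    and ext2: "\<And>v. (INF u. (xr - yr) \<bullet> f s xs (m s) u v) \<le> (INF u. (xr - yr) \<bullet> f s xs (m s) u vs)"
    using extremal by blast
  define w where "w = xr - yr"
  define E where "E = f_modulus (r - s)"
  have up: "w \<bullet> (x r - xs) \<le> ((SUP v. w \<bullet> f s xs (m s) us v) + norm w * E) * (r - s)"
    unfolding E_def by (rule traj_dirac_fst_inner_le[OF x_traj \<zeta>_ctrl m_in s_r])
  have lo: "((INF u. w \<bullet> f s ys (\<nu> s) u vs) - norm w * E) * (r - s) \<le> w \<bullet> (y r - ys)"
    unfolding E_def by (rule traj_dirac_snd_inner_ge[OF y_traj \<xi>_ctrl \<nu>_in s_r])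
  have saddle: "(SUP v. w \<bullet> f s xs (m s) us v) \<le> (INF u. w \<bullet> f s xs (m s) u vs)"
    unfolding w_def by (rule isaacs_extremal_le[OF isaacs[OF sT mP] ext1 ext2])
  have shift: "(INF u. w \<bullet> f s xs (m s) u vs) - norm w * (L * norm w + L * W2 (m s) (\<nu> s))
      \<le> (INF u. w \<bullet> f s ys (\<nu> s) u vs)"
    using INF_inner_f_shift[OF sT mP \<nu>P, of w xs vs ys] nw unfolding w_def by simp
  have "norm (x r - xs) \<le> C0 * (r - s)" "norm (y r - ys) \<le> C0 * (r - s)"
    using traj_norm_diff_le[OF x_traj admissible_dirac_prod_ctrl[OF \<zeta>_ctrl] m_in s_r]
      traj_norm_diff_le[OF y_traj admissible_prod_dirac_ctrl[OF \<xi>_ctrl] \<nu>_in s_r] by auto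
  then have drift_gap: "norm ((x r - xs) - (y r - ys)) \<le> 2 * C0 * (r - s)"
    using norm_triangle_ineq4[of "x r - xs" "y r - ys"] by linarith
  have "tdist (x r) (y r) \<le> norm (w + ((x r - xs) - (y r - ys)))"
    using tdist_le[of "x r" "y r" "k1 - k2"] unfolding w_def xr yr int_vec_diff
    by (simp add: algebra_simps)
  then have "(tdist (x r) (y r))\<^sup>2 \<le> (norm (w + ((x r - xs) - (y r - ys))))\<^sup>2"
    using tdist_nonneg by (intro power_mono)
  also have "\<dots> \<le> (norm w)\<^sup>2 * (1 + 3 * L * (r - s)) + L * (W2 (m s) (\<nu> s))\<^sup>2 * (r - s)
      + (4 * sqrt CARD('d) * E + 4 * C0\<^sup>2 * (r - s)) * (r - s)"
    using s_r nw tdist_le_sqrt_CARD[of xs ys] f_modulus_nonneg[OF sT mP, of "r - s"]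
    by (intro sq_norm_add_diff_le[OF up lo saddle shift drift_gap _ L_nonneg[OF sT mP]])
      (auto simp: w_def E_def)
  finally show ?thesis
    by (simp add: varpi2_eq E_def w_def nw)
qed

end
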